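(* Let $n\ge k\ge 1$ and let $\mathbf{M}$ be a $k\times n$ binary matrix all of whose rows have Hamming weight exactly $n-k+1$ and which satisfies the MDS Condition. For $i\in[k]$ let $Z_i=\{j\in[n]: m_{i,j}=0\}$ (so $|Z_i|=k-1$). Suppose that the family $(Z_1,\ldots,Z_k)$ has a unique multiset union. Then for every prime power $q\geq n+k-1$ there exists an $[n,k]_q$ MDS code having a generator matrix that fits $\mathbf{M}$. In particular, if every family of $(k-1)$-subsets $Z_1,\dots,Z_k$ of $[n]$ satisfying $|\bigcap_{i\in I}Z_i|\le k-|I|$ for all nonempty $I\subseteq[k]$ (for all $n\ge k\ge1$) has a unique multiset union, then for all such $\mathbf{M}$ and all prime powers $q\ge n+k-1$ such an MDS code exists.
   Context: $[n]=\{1,\ldots,n\}$. For a $k\times n$ binary matrix $\mathbf{M}=(m_{i,j})$ with rows $\mathbf{M}_i$, ${\sf supp}(\mathbf{M}_i)=\{j: m_{i,j}\ne 0\}$; $\mathbf{M}$ satisfies the MDS Condition if $|\bigcup_{i\in I}{\sf supp}(\mathbf{M}_i)|\ge n-k+|I|$ for all nonempty $I\subseteq[k]$. A matrix $\mathbf{G}=(g_{i,j})\in\mathbb{F}_q^{k\times n}$ fits $\mathbf{M}$ if $g_{i,j}=0$ whenever $m_{i,j}=0$. An $[n,k]_q$ MDS code is a $k$-dimensional linear code in $\mathbb{F}_q^n$ with minimum distance $n-k+1$. Multiset unions: given $(k-1)$-subsets $Z_1,\ldots,Z_k$ of $[n]$, a choice is a pair $(\sigma,(S_1,\ldots,S_k))$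 where $\sigma$ is a permutation of $[k]$ and $S_i\subseteq Z_i$ with $|S_i|=\sigma(i)-1$ for each $i$; its multiset union is the multiset $S_1\uplus\cdots\uplus S_k$ (multiplicity of $j$ = number of $i$ with $j\in S_i$). The family $(Z_1,\ldots,Z_k)$ has a unique multiset union if there is a multiset that arises as the multiset union of exactly one choice. *)

theory Defs
  imports Main "HOL-Library.Multiset" "HOL-Combinatorics.Permutations"
begin

text \<open>Binary k x n matrices are functions M :: nat => nat => bool, rows indexed by 1..k,
  columns by 1..n. Matrices over a field are functions G :: nat => nat => 'a.\<close>

definition row_supp :: "nat \<Rightarrow> (nat \<Rightarrow> nat \<Rightarrow> bool) \<Rightarrow> nat \<Rightarrow> nat set" where
  "row_supp n M i = {j \<in> {1..n}. M i j}"

definition zero_set :: "nat \<Rightarrow> (nat \<Rightarrow> nat \<Rightarrow> bool) \<Rightarrow> nat \<Rightarrow> nat set" where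
  "zero_set n M i = {j \<in> {1..n}. \<not> M i j}"

definition MDS_condition :: "nat \<Rightarrow> nat \<Rightarrow> (nat \<Rightarrow> nat \<Rightarrow> bool) \<Rightarrow> bool" where
  "MDS_condition n k M \<longleftrightarrow>
     (\<forall>I. I \<subseteq> {1..k} \<and> I \<noteq> {} \<longrightarrow> card (\<Union>i\<in>I. row_supp n M i) \<ge> n - k + card I)"

definition fits :: "nat \<Rightarrow> nat \<Rightarrow> (nat \<Rightarrow> nat \<Rightarrow> bool) \<Rightarrow> (nat \<Rightarrow> nat \<Rightarrow> 'a::zero) \<Rightarrow> bool" where
  "fits n k M G \<longleftrightarrow> (\<forall>i\<in>{1..k}. \<forall>j\<in>{1..n}. \<not> M i j \<longrightarrow> G i j = 0)"

definition gen_code :: "nat \<Rightarrow> nat \<Rightarrow> (nat \<Rightarrow> nat \<Rightarrow> 'a::field) \<Rightarrow> (nat \<Rightarrow> 'a) set" where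
  "gen_code n k G = {w. \<exists>c. w = (\<lambda>j. if j \<in> {1..n} then (\<Sum>i\<in>{1..k}. c i * G i j) else 0)}"

definition hamming_dist :: "nat \<Rightarrow> (nat \<Rightarrow> 'a) \<Rightarrow> (nat \<Rightarrow> 'a) \<Rightarrow> nat" where
  "hamming_dist n u v = card {j \<in> {1..n}. u j \<noteq> v j}"

definition min_distance :: "nat \<Rightarrow> (nat \<Rightarrow> 'a) set \<Rightarrow> nat" where
  "min_distance n C = Min {hamming_dist n u v | u v. u \<in> C \<and> v \<in> C \<and> u \<noteq> v}"

definition MDS_generator :: "nat \<Rightarrow> nat \<Rightarrow> (nat \<Rightarrow> nat \<Rightarrow> 'a::field) \<Rightarrow> bool" where
  "MDS_generator n k G \<longleftrightarrow>
     (\<forall>c. (\<forall>j\<in>{1..n}. (\<Sum>i\<in>{1..k}. c i * G i j) = 0) \<longrightarrow> (\<forall>i\<in>{1..k}. c i = 0))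
     \<and> min_distance n (gen_code n k G) = n - k + 1"

definition choices :: "nat \<Rightarrow> (nat \<Rightarrow> nat set) \<Rightarrow> ((nat \<Rightarrow> nat) \<times> (nat \<Rightarrow> nat set)) set" where
  "choices k Z = {(\<sigma>, S). \<sigma> permutes {1..k}
       \<and> (\<forall>i\<in>{1..k}. S i \<subseteq> Z i \<and> card (S i) = \<sigma> i - 1)
       \<and> (\<forall>i. i \<notin> {1..k} \<longrightarrow> S i = {})}"

definition multiset_union :: "nat \<Rightarrow> (nat \<Rightarrow> nat set) \<Rightarrow> nat multiset" where
  "multiset_union k S = (\<Sum>i\<in>{1..k}. mset_set (S i))"

definition unique_multiset_union :: "nat \<Rightarrow> (nat \<Rightarrow> nat set) \<Rightarrow> bool" where
  "unique_multiset_union k Z \<longleftrightarrow>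
     (\<exists>U. \<exists>!ch. ch \<in> choices k Z \<and> multiset_union k (snd ch) = U)"

end

theory Submission
  imports Defs "Jordan_Normal_Form.Determinant"
begin

text \<open>Fix pairwise distinct \<open>\<beta>\<^sub>1, \<dots>, \<beta>\<^sub>n\<close> and let row \<open>i\<close> of \<open>G\<close> evaluate
  \<open>f\<^sub>i = (\<Prod>j\<in>Z\<^sub>i. x + \<beta>\<^sub>j)\<close> at \<open>-\<beta>\<^sub>1, \<dots>, -\<beta>\<^sub>n\<close>. It vanishes exactly on \<open>Z\<^sub>i\<close>, so \<open>G\<close> fits \<open>M\<close>,
  and if the \<open>f\<^sub>i\<close> are linearly independent then every nonzero combination of rows evaluates a
  nonzero polynomial of degree \<open>< k\<close>, hence has at least \<open>n - k + 1\<close> nonzero entries.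

  The coefficients of \<open>f\<^sub>i\<close> are elementary symmetric functions of the \<open>\<beta>\<^sub>j\<close>, \<open>j \<in> Z\<^sub>i\<close>. Expanding the
  determinant of the coefficient matrix by Leibniz gives a sum over choices \<open>(\<sigma>, S)\<close> of
  \<open>sign \<sigma> \<cdot> \<Prod>\<^sub>j \<beta>\<^sub>j ^ m\<^sub>j\<close>, where \<open>m\<close> is the multiset union of the \<open>S\<^sub>i\<close>. A unique multiset union is
  therefore a monomial with coefficient \<open>\<plusminus>1\<close>, so the determinant is a nonzero polynomial in the
  \<open>\<beta>\<^sub>j\<close>, of degree \<open>< k\<close> in each of them since every column lies outside some \<open>Z\<^sub>i\<close>. With
  \<open>q \<ge> n + k - 1\<close> it has a nonzero value at pairwise distinct \<open>\<beta>\<^sub>j\<close>. For the second claim, the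
  MDS condition on \<open>M\<close> is exactly the intersection bound on its zero sets.\<close>

section \<open>Nonvanishing at points with distinct coordinates\<close>

lemma exists_nonroot_outside:
  fixes p :: "'a::{finite,field} poly"
  assumes "p \<noteq> 0" and "card A + degree p < card (UNIV :: 'a set)"
  shows "\<exists>x. x \<notin> A \<and> poly p x \<noteq> 0"
proof -
  have "card (A \<union> {x. poly p x = 0}) \<le> card A + degree p"
    using card_Un_le[of A "{x. poly p x = 0}"] card_poly_roots_bound[OF assms(1)] by linarith
  then have "A \<union> {x. poly p x = 0} \<noteq> UNIV"
    using assms(2) by auto
  then show ?thesis by auto
qed

lemma sum_monomials_eq_poly_last_var:
  fixes c :: "'i \<Rightarrow> 'a::comm_ring_1"
  assumes "finite X" and "\<forall>x\<in>X. e x (Suc N) \<le> d"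
  shows "(\<Sum>x\<in>X. c x * (\<Prod>j\<in>{1..Suc N}. \<alpha> j ^ e x j))
       = poly (\<Sum>i\<le>d. monom (\<Sum>x | x \<in> X \<and> e x (Suc N) = i. c x * (\<Prod>j\<in>{1..N}. \<alpha> j ^ e x j)) i)
           (\<alpha> (Suc N))"
proof -
  have "(\<Sum>x\<in>X. c x * (\<Prod>j\<in>{1..Suc N}. \<alpha> j ^ e x j))
      = (\<Sum>x\<in>X. c x * (\<Prod>j\<in>{1..N}. \<alpha> j ^ e x j) * \<alpha> (Suc N) ^ e x (Suc N))"
    by (simp add: prod.cl_ivl_Suc mult.assoc)
  also have "\<dots> = (\<Sum>i\<le>d. \<Sum>x | x \<in> X \<and> e x (Suc N) = i.
                     c x * (\<Prod>j\<in>{1..N}. \<alpha> j ^ e x j) * \<alpha> (Suc N) ^ e x (Suc N))"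
    by (rule sum.group[symmetric]) (use assms in auto)
  also have "\<dots> = (\<Sum>i\<le>d. (\<Sum>x | x \<in> X \<and> e x (Suc N) = i. c x * (\<Prod>j\<in>{1..N}. \<alpha> j ^ e x j))
                     * \<alpha> (Suc N) ^ i)"
    by (simp add: sum_distrib_right)
  also have "\<dots> = poly (\<Sum>i\<le>d. monom (\<Sum>x | x \<in> X \<and> e x (Suc N) = i.
                     c x * (\<Prod>j\<in>{1..N}. \<alpha> j ^ e x j)) i) (\<alpha> (Suc N))"
    by (simp add: poly_sum poly_monom)
  finally show ?thesis .
qed

lemma inj_on_fun_upd_Suc:
  assumes "inj_on \<alpha> {1..N}" and "y \<notin> \<alpha> ` {1..N}"
  shows "inj_on (\<alpha>(Suc N := y)) {1..Suc N}"
proof -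
  have "inj_on (\<alpha>(Suc N := y)) {1..N}"
    by (rule inj_on_fun_updI[OF assms])
  moreover have "y \<notin> \<alpha>(Suc N := y) ` {1..N}"
    using assms(2) by (simp add: fun_upd_image)
  moreover have "{1..Suc N} = insert (Suc N) {1..N}"
    by auto
  ultimately show ?thesis by simp
qed

text \<open>The coordinates are chosen one at a time. Grouping the terms by the exponent of the last
  variable, the coefficient of its power \<open>m (N + 1)\<close> is nonzero at the earlier coordinates by
  induction, so the last coordinate only has to avoid those \<open>N\<close> values and at most \<open>d\<close> roots.\<close>
lemma exists_inj_nonvanishing:
  fixes c :: "'i \<Rightarrow> 'a::{finite,field}"
  assumes "finite X" and "\<forall>x\<in>X. \<forall>j\<in>{1..N}. e x j \<le> d"
    and "(\<Sum>x | x \<in> X \<and> (\<forall>j\<in>{1..N}. e x j = m j). c x) \<noteq> 0"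
    and "N + d \<le> card (UNIV :: 'a set)"
  shows "\<exists>\<alpha>. inj_on \<alpha> {1..N} \<and> (\<Sum>x\<in>X. c x * (\<Prod>j\<in>{1..N}. \<alpha> j ^ e x j)) \<noteq> 0"
  using assms
proof (induction N arbitrary: X)
  case 0
  then show ?case by simp
next
  case (Suc N)
  let ?X' = "{x \<in> X. e x (Suc N) = m (Suc N)}"
  have "{x. x \<in> ?X' \<and> (\<forall>j\<in>{1..N}. e x j = m j)} = {x. x \<in> X \<and> (\<forall>j\<in>{1..Suc N}. e x j = m j)}"
    using le_Suc_eq by auto
  then obtain \<alpha> where inj: "inj_on \<alpha> {1..N}"
    and ne: "(\<Sum>x\<in>?X'. c x * (\<Prod>j\<in>{1..N}. \<alpha> j ^ e x j)) \<noteq> 0"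
    using Suc.IH[of ?X'] Suc.prems by auto
  define p where "p = (\<Sum>i\<le>d. monom (\<Sum>x | x \<in> X \<and> e x (Suc N) = i.
                                       c x * (\<Prod>j\<in>{1..N}. \<alpha> j ^ e x j)) i)"
  have "m (Suc N) \<le> d"
  proof -
    have "{x. x \<in> X \<and> (\<forall>j\<in>{1..Suc N}. e x j = m j)} \<noteq> {}"
      using Suc.prems(3) by (metis sum.empty)
    then obtain x where "x \<in> X" and "e x (Suc N) = m (Suc N)"
      by auto
    moreover have "Suc N \<in> {1..Suc N}" by simp
    ultimately show ?thesis using Suc.prems(2) by metis
  qed
  then have "coeff p (m (Suc N)) \<noteq> 0"
    using ne by (simp add: p_def coeff_sum coeff_monom)
  then have "p \<noteq> 0" by auto
  moreover have "degree p \<le> d"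
    unfolding p_def by (rule degree_sum_le) (auto intro: order.trans[OF degree_monom_le])
  moreover have "card (\<alpha> ` {1..N}) \<le> N"
    using card_image_le[of "{1..N}" \<alpha>] by simp
  ultimately obtain y where y: "y \<notin> \<alpha> ` {1..N}" "poly p y \<noteq> 0"
    using exists_nonroot_outside[of p "\<alpha> ` {1..N}"] Suc.prems(4) by fastforce
  define \<beta> where "\<beta> = \<alpha>(Suc N := y)"
  have "inj_on \<beta> {1..Suc N}"
    unfolding \<beta>_def by (rule inj_on_fun_upd_Suc[OF inj y(1)])
  moreover have "(\<Sum>x\<in>X. c x * (\<Prod>j\<in>{1..Suc N}. \<beta> j ^ e x j)) = poly p y"
  proof -
    have "(\<Prod>j\<in>{1..N}. \<beta> j ^ e x j) = (\<Prod>j\<in>{1..N}. \<alpha> j ^ e x j)" for x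
      by (rule prod.cong) (auto simp: \<beta>_def)
    then show ?thesis
      using sum_monomials_eq_poly_last_var[of X e N d c \<beta>] Suc.prems(1,2)
      by (simp add: p_def \<beta>_def)
  qed
  ultimately show ?case using y(2) by metis
qed

section \<open>Determinants of elementary symmetric functions\<close>

definition esym :: "nat set \<Rightarrow> (nat \<Rightarrow> 'a::comm_ring_1) \<Rightarrow> nat \<Rightarrow> 'a" where
  "esym Z b t = (\<Sum>S | S \<subseteq> Z \<and> card S = t. \<Prod>j\<in>S. b j)"

lemma coeff_prod_linear_factors:
  fixes b :: "nat \<Rightarrow> 'a::comm_ring_1"
  assumes "finite Z" and "t \<le> card Z"
  shows "coeff (\<Prod>j\<in>Z. [:b j, 1:]) t = esym Z b (card Z - t)"
proof -
  have "(\<Prod>j\<in>Z. [:b j, 1:]) = (\<Prod>j\<in>Z. [:b j:] + monom 1 1)"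
    by (simp add: monom_Suc one_pCons)
  also have "\<dots> = (\<Sum>S\<in>Pow Z. (\<Prod>j\<in>S. [:b j:]) * (\<Prod>j\<in>Z - S. monom 1 1))"
    by (rule prod_add[OF assms(1)])
  also have "\<dots> = (\<Sum>S\<in>Pow Z. monom (\<Prod>j\<in>S. b j) (card (Z - S)))"
    by (intro sum.cong refl) (simp add: prod_to_poly monom_power smult_monom)
  finally have "coeff (\<Prod>j\<in>Z. [:b j, 1:]) t
      = (\<Sum>S\<in>Pow Z. if card (Z - S) = t then \<Prod>j\<in>S. b j else 0)"
    by (simp add: coeff_sum coeff_monom eq_commute)
  also have "\<dots> = (\<Sum>S\<in>{S \<in> Pow Z. card (Z - S) = t}. \<Prod>j\<in>S. b j)"
    by (rule sum.inter_filter[symmetric]) (simp add: assms(1))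
  also have "{S \<in> Pow Z. card (Z - S) = t} = {S. S \<subseteq> Z \<and> card S = card Z - t}"
    using assms card_mono[OF assms(1)] by (auto simp: card_Diff_subset finite_subset)
  finally show ?thesis unfolding esym_def .
qed

text \<open>Matrices of \<open>Jordan_Normal_Form\<close> are indexed from \<open>0\<close>; bordering a \<open>k \<times> k\<close> matrix
  with a unit row and column \<open>0\<close> keeps the indices \<open>1..k\<close> of the paper without reindexing
  permutations.\<close>
definition border_mat :: "nat \<Rightarrow> (nat \<Rightarrow> nat \<Rightarrow> 'a::comm_ring_1) \<Rightarrow> 'a mat" where
  "border_mat k E = mat (Suc k) (Suc k)
     (\<lambda>(i, t). if i = 0 \<and> t = 0 then 1 else if i = 0 \<or> t = 0 then 0 else E i t)"

lemma border_mat_cong: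
  assumes "\<And>i t. i \<in> {1..k} \<Longrightarrow> t \<in> {1..k} \<Longrightarrow> E i t = E' i t"
  shows "border_mat k E = border_mat k E'"
  unfolding border_mat_def using assms by (intro eq_matI) auto

lemma permutes_if_fixes_0:
  assumes "p permutes {0..<Suc k}" and "p 0 = 0"
  shows "p permutes {1..k}"
  by (rule permutes_superset[OF assms(1)]) (use assms(2) in \<open>auto simp: Suc_le_eq\<close>)

lemma det_border_mat:
  "det (border_mat k E)
     = (\<Sum>\<sigma> | \<sigma> permutes {1..k}. of_int (sign \<sigma>) * (\<Prod>i\<in>{1..k}. E i (\<sigma> i)))"
proof -
  define T where "T p = of_int (sign p) * (\<Prod>i = 0..<Suc k. border_mat k E $$ (i, p i))" for p
  have split0: "{0..<Suc k} = insert 0 {1..k}"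
    by auto
  have "det (border_mat k E) = (\<Sum>p | p permutes {0..<Suc k}. T p)"
    unfolding det_def T_def by (simp add: border_mat_def)
  also have "\<dots> = (\<Sum>p | p permutes {1..k}. T p)"
  proof (rule sum.mono_neutral_right)
    show "finite {p. p permutes {0..<Suc k}}"
      by (simp add: finite_permutations)
    show "{p. p permutes {1..k}} \<subseteq> {p. p permutes {0..<Suc k}}"
      by (auto intro: permutes_subset)
    show "\<forall>p\<in>{p. p permutes {0..<Suc k}} - {p. p permutes {1..k}}. T p = 0"
    proof
      fix p assume "p \<in> {p. p permutes {0..<Suc k}} - {p. p permutes {1..k}}"
      then have p: "p permutes {0..<Suc k}" "p 0 \<noteq> 0"
        using permutes_if_fixes_0 by blast+
      then have "border_mat k E $$ (0, p 0) = 0"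
        using permutes_in_image[OF p(1), of 0] by (simp add: border_mat_def)
      then show "T p = 0"
        unfolding T_def split0 by simp
    qed
  qed
  also have "\<dots> = (\<Sum>\<sigma> | \<sigma> permutes {1..k}. of_int (sign \<sigma>) * (\<Prod>i\<in>{1..k}. E i (\<sigma> i)))"
  proof (rule sum.cong[OF refl])
    fix p assume "p \<in> {p. p permutes {1..k}}"
    then have p: "p permutes {1..k}" by simp
    have "p 0 = 0"
      using permutes_not_in[OF p] by simp
    moreover have "border_mat k E $$ (i, p i) = E i (p i)" if "i \<in> {1..k}" for i
    proof -
      have "p i \<in> {1..k}"
        using that permutes_in_image[OF p] by simp
      then show ?thesis
        using that by (simp add: border_mat_def)
    qed
    ultimately show "T p = of_int (sign p) * (\<Prod>i\<in>{1..k}. E i (p i))"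
      unfolding T_def split0 by (simp add: border_mat_def)
  qed
  finally show ?thesis .
qed

lemma border_mat_rows_independent:
  fixes E :: "nat \<Rightarrow> nat \<Rightarrow> 'a::field"
  assumes "det (border_mat k E) \<noteq> 0"
    and "\<forall>t\<in>{1..k}. (\<Sum>i\<in>{1..k}. c i * E i t) = 0"
  shows "\<forall>i\<in>{1..k}. c i = 0"
proof -
  define A where "A = transpose_mat (border_mat k E)"
  have A: "A \<in> carrier_mat (Suc k) (Suc k)"
    by (simp add: A_def border_mat_def)
  have "det A \<noteq> 0"
    using assms(1) det_transpose[of "border_mat k E" "Suc k"] by (simp add: A_def border_mat_def)
  define v where "v = vec (Suc k) (\<lambda>i. if i = 0 then 0 else c i)"
  have split0: "{0..<Suc k} = insert 0 {1..k}"
    by auto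
  have "A *\<^sub>v v = 0\<^sub>v (Suc k)"
  proof (rule eq_vecI)
    fix t assume "t < dim_vec (0\<^sub>v (Suc k) :: 'a vec)"
    then have "t < Suc k" by simp
    then have "(A *\<^sub>v v) $ t = (\<Sum>i\<in>{1..k}. border_mat k E $$ (i, t) * c i)"
      by (simp add: A_def v_def mult_mat_vec_def scalar_prod_def split0 border_mat_def)
    also have "\<dots> = 0"
      using assms(2) \<open>t < Suc k\<close> by (cases "t = 0") (auto simp: border_mat_def mult.commute)
    finally show "(A *\<^sub>v v) $ t = 0\<^sub>v (Suc k) $ t"
      using \<open>t < Suc k\<close> by simp
  qed (simp add: A_def v_def border_mat_def)
  moreover have "v \<in> carrier_vec (Suc k)"
    by (simp add: v_def)
  moreover have "\<not> (\<exists>v. v \<in> carrier_vec (Suc k) \<and> v \<noteq> 0\<^sub>v (Suc k) \<and> A *\<^sub>v v = 0\<^sub>v (Suc k))"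
    using \<open>det A \<noteq> 0\<close> det_0_iff_vec_prod_zero_field[OF A] by simp
  ultimately have "v = 0\<^sub>v (Suc k)"
    by blast
  show ?thesis
  proof
    fix i assume "i \<in> {1..k}"
    then have "v $ i = c i"
      by (simp add: v_def)
    with \<open>v = 0\<^sub>v (Suc k)\<close> \<open>i \<in> {1..k}\<close> show "c i = 0"
      by simp
  qed
qed

lemma lin_indep_if_det_border_coeff_nonzero:
  fixes f :: "nat \<Rightarrow> 'a::field poly"
  assumes "det (border_mat k (\<lambda>i t. coeff (f i) (k - t))) \<noteq> 0"
    and "(\<Sum>i\<in>{1..k}. smult (c i) (f i)) = 0"
  shows "\<forall>i\<in>{1..k}. c i = 0"
proof (rule border_mat_rows_independent[OF assms(1)], intro ballI)
  fix t
  show "(\<Sum>i\<in>{1..k}. c i * coeff (f i) (k - t)) = 0"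
    using arg_cong[OF assms(2), of "\<lambda>p. coeff p (k - t)"] by (simp add: coeff_sum)
qed

lemma prod_sum_eq_sum_funs_default:
  fixes g :: "'i \<Rightarrow> 'b \<Rightarrow> 'c::comm_semiring_1"
  assumes "finite I" and "\<And>i. i \<in> I \<Longrightarrow> finite (F i)"
  shows "(\<Prod>i\<in>I. \<Sum>x\<in>F i. g i x)
       = (\<Sum>h | (\<forall>i\<in>I. h i \<in> F i) \<and> (\<forall>i. i \<notin> I \<longrightarrow> h i = d). \<Prod>i\<in>I. g i (h i))"
proof -
  have "(\<Prod>i\<in>I. \<Sum>x\<in>F i. g i x) = (\<Sum>h\<in>PiE I F. \<Prod>i\<in>I. g i (h i))"
    by (rule prod_sum_PiE[OF assms])
  also have "\<dots> = (\<Sum>h | (\<forall>i\<in>I. h i \<in> F i) \<and> (\<forall>i. i \<notin> I \<longrightarrow> h i = d). \<Prod>i\<in>I. g i (h i))"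
    by (rule sum.reindex_bij_witness[of _ "\<lambda>h. restrict h I" "\<lambda>h i. if i \<in> I then h i else d"])
      (auto simp: PiE_def extensional_def fun_eq_iff)
  finally show ?thesis .
qed

lemma count_sum_mset_set:
  assumes "finite I" and "\<forall>i\<in>I. finite (S i)"
  shows "count (\<Sum>i\<in>I. mset_set (S i)) j = card {i \<in> I. j \<in> S i}"
proof -
  have "count (\<Sum>i\<in>I. mset_set (S i)) j = (\<Sum>i\<in>I. if j \<in> S i then 1 else 0)"
    unfolding count_sum by (rule sum.cong) (use assms(2) in auto)
  also have "\<dots> = card {i \<in> I. j \<in> S i}"
    using assms(1) by (simp add: sum.inter_filter[symmetric])
  finally show ?thesis .
qed

lemma prod_prod_eq_prod_power_count:
  fixes \<beta> :: "nat \<Rightarrow> 'a::comm_monoid_mult"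
  assumes "finite I" and "finite J" and "\<forall>i\<in>I. S i \<subseteq> J"
  shows "(\<Prod>i\<in>I. \<Prod>j\<in>S i. \<beta> j) = (\<Prod>j\<in>J. \<beta> j ^ count (\<Sum>i\<in>I. mset_set (S i)) j)"
proof -
  have "(\<Prod>i\<in>I. \<Prod>j\<in>S i. \<beta> j) = (\<Prod>i\<in>I. \<Prod>j\<in>J. \<beta> j ^ (if j \<in> S i then 1 else 0))"
  proof (rule prod.cong[OF refl])
    fix i assume "i \<in> I"
    then have "S i = {j \<in> J. j \<in> S i}"
      using assms(3) by auto
    then have "(\<Prod>j\<in>S i. \<beta> j) = (\<Prod>j\<in>J. if j \<in> S i then \<beta> j else 1)"
      using prod.inter_filter[OF assms(2), of \<beta> "\<lambda>j. j \<in> S i"] by simp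
    then show "(\<Prod>j\<in>S i. \<beta> j) = (\<Prod>j\<in>J. \<beta> j ^ (if j \<in> S i then 1 else 0))"
      by (simp add: if_distrib cong: if_cong)
  qed
  also have "\<dots> = (\<Prod>j\<in>J. \<beta> j ^ (\<Sum>i\<in>I. if j \<in> S i then 1 else 0))"
    by (subst prod.swap) (simp add: power_sum)
  also have "\<dots> = (\<Prod>j\<in>J. \<beta> j ^ card {i \<in> I. j \<in> S i})"
    using assms(1) by (simp add: sum.inter_filter[symmetric])
  also have "\<dots> = (\<Prod>j\<in>J. \<beta> j ^ count (\<Sum>i\<in>I. mset_set (S i)) j)"
    using assms finite_subset by (subst count_sum_mset_set) blast+
  finally show ?thesis .
qed

lemma finite_choices:
  assumes "\<forall>i\<in>{1..k}. finite (Z i)"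
  shows "finite (choices k Z)"
proof (rule finite_subset)
  show "choices k Z \<subseteq> {\<sigma>. \<sigma> permutes {1..k}}
          \<times> {S. \<forall>i. (i \<in> {1..k} \<longrightarrow> S i \<in> Pow (\<Union>i\<in>{1..k}. Z i)) \<and> (i \<notin> {1..k} \<longrightarrow> S i = {})}"
    unfolding choices_def by blast
  show "finite ({\<sigma>. \<sigma> permutes {1..k}}
          \<times> {S. \<forall>i. (i \<in> {1..k} \<longrightarrow> S i \<in> Pow (\<Union>i\<in>{1..k}. Z i)) \<and> (i \<notin> {1..k} \<longrightarrow> S i = {})})"
    using assms by (intro finite_cartesian_product finite_permutations finite_set_of_finite_funs) auto
qed

lemma snd_choices_subset:
  assumes "ch \<in> choices k Z" and "i \<in> {1..k}"
  shows "snd ch i \<subseteq> Z i"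
  using assms unfolding choices_def by force

lemma count_multiset_union:
  assumes "ch \<in> choices k Z" and "\<forall>i\<in>{1..k}. finite (Z i)"
  shows "count (multiset_union k (snd ch)) j = card {i \<in> {1..k}. j \<in> snd ch i}"
proof -
  have "\<forall>i\<in>{1..k}. finite (snd ch i)"
    using assms snd_choices_subset finite_subset by metis
  then show ?thesis
    unfolding multiset_union_def by (simp add: count_sum_mset_set)
qed

lemma count_multiset_union_le:
  assumes "ch \<in> choices k Z" and "\<forall>i\<in>{1..k}. finite (Z i)"
    and "i0 \<in> {1..k}" and "j \<notin> Z i0"
  shows "count (multiset_union k (snd ch)) j \<le> k - 1"
proof -
  have "{i \<in> {1..k}. j \<in> snd ch i} \<subseteq> {1..k} - {i0}"
    using snd_choices_subset[OF assms(1)] assms(4) by blast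
  then have "card {i \<in> {1..k}. j \<in> snd ch i} \<le> card ({1..k} - {i0})"
    by (rule card_mono[rotated]) simp
  then show ?thesis
    using assms(3) count_multiset_union[OF assms(1,2)] by simp
qed

lemma count_multiset_union_eq_0:
  assumes "ch \<in> choices k Z" and "\<forall>i\<in>{1..k}. finite (Z i)" and "\<forall>i\<in>{1..k}. j \<notin> Z i"
  shows "count (multiset_union k (snd ch)) j = 0"
proof -
  have "{i \<in> {1..k}. j \<in> snd ch i} = {}"
    using snd_choices_subset[OF assms(1)] assms(3) by blast
  then show ?thesis
    using count_multiset_union[OF assms(1,2)] by simp
qed

text \<open>Multiplicities outside \<open>{1..n}\<close> vanish, so a unique multiset union is already determined by
  its multiplicities on \<open>{1..n}\<close>.\<close>
lemma unique_multiset_unionE: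
  assumes "unique_multiset_union k Z" and Z: "\<forall>i\<in>{1..k}. Z i \<subseteq> {1..n}"
  obtains ch0 where "ch0 \<in> choices k Z"
    and "{ch \<in> choices k Z. \<forall>j\<in>{1..n}.
            count (multiset_union k (snd ch)) j = count (multiset_union k (snd ch0)) j} = {ch0}"
proof -
  have finZ: "\<forall>i\<in>{1..k}. finite (Z i)"
    using Z finite_subset by blast
  obtain ch0 where ch0: "ch0 \<in> choices k Z"
    and unique: "\<And>ch. ch \<in> choices k Z \<Longrightarrow> multiset_union k (snd ch) = multiset_union k (snd ch0)
                   \<Longrightarrow> ch = ch0"
    using assms(1) unfolding unique_multiset_union_def by metis
  have outside: "count (multiset_union k (snd ch)) j = 0" if "ch \<in> choices k Z" and "j \<notin> {1..n}"
    for ch j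
    using count_multiset_union_eq_0[OF that(1) finZ] Z that(2) by blast
  have "ch = ch0"
    if ch: "ch \<in> choices k Z"
      and agree: "\<forall>j\<in>{1..n}. count (multiset_union k (snd ch)) j = count (multiset_union k (snd ch0)) j"
    for ch
  proof (rule unique[OF ch], rule multiset_eqI)
    fix j
    show "count (multiset_union k (snd ch)) j = count (multiset_union k (snd ch0)) j"
      using agree outside[OF ch] outside[OF ch0] by (cases "j \<in> {1..n}") auto
  qed
  with ch0 show ?thesis
    using that[OF ch0] by blast
qed

lemma sum_permutes_esym_eq_sum_choices:
  fixes \<beta> :: "nat \<Rightarrow> 'a::comm_ring_1"
  assumes Z: "\<forall>i\<in>{1..k}. Z i \<subseteq> {1..n}"
  shows "(\<Sum>\<sigma> | \<sigma> permutes {1..k}. of_int (sign \<sigma>) * (\<Prod>i\<in>{1..k}. esym (Z i) \<beta> (\<sigma> i - 1)))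
       = (\<Sum>ch\<in>choices k Z. of_int (sign (fst ch))
            * (\<Prod>j\<in>{1..n}. \<beta> j ^ count (multiset_union k (snd ch)) j))"
proof -
  define Ch where "Ch \<sigma> = {S. (\<forall>i\<in>{1..k}. S i \<in> {T. T \<subseteq> Z i \<and> card T = \<sigma> i - 1})
                              \<and> (\<forall>i. i \<notin> {1..k} \<longrightarrow> S i = {})}" for \<sigma> :: "nat \<Rightarrow> nat"
  have choices_eq: "choices k Z = Sigma {\<sigma>. \<sigma> permutes {1..k}} Ch"
    unfolding choices_def Ch_def by (auto simp del: atLeastAtMost_iff)
  have fin_Ch: "finite (Ch \<sigma>)" for \<sigma>
    by (rule finite_subset[OF _ finite_set_of_finite_funs[of "{1..k}" "Pow {1..n}" "{}"]])
      (use Z in \<open>auto simp: Ch_def simp del: atLeastAtMost_iff\<close>)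
  have expand: "(\<Prod>i\<in>{1..k}. esym (Z i) \<beta> (\<sigma> i - 1)) = (\<Sum>S\<in>Ch \<sigma>. \<Prod>i\<in>{1..k}. \<Prod>j\<in>S i. \<beta> j)"
    for \<sigma>
    unfolding esym_def Ch_def
  proof (rule prod_sum_eq_sum_funs_default)
    fix i assume "i \<in> {1..k}"
    then have "finite (Z i)"
      using Z finite_subset by blast
    then show "finite {T. T \<subseteq> Z i \<and> card T = \<sigma> i - 1}"
      by simp
  qed simp
  have "(\<Sum>\<sigma> | \<sigma> permutes {1..k}. of_int (sign \<sigma>) * (\<Prod>i\<in>{1..k}. esym (Z i) \<beta> (\<sigma> i - 1)))
      = (\<Sum>\<sigma> | \<sigma> permutes {1..k}. \<Sum>S\<in>Ch \<sigma>. of_int (sign \<sigma>) * (\<Prod>i\<in>{1..k}. \<Prod>j\<in>S i. \<beta> j))"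
    by (simp only: expand sum_distrib_left)
  also have "\<dots> = (\<Sum>ch\<in>choices k Z. of_int (sign (fst ch)) * (\<Prod>i\<in>{1..k}. \<Prod>j\<in>snd ch i. \<beta> j))"
    unfolding choices_eq
    by (subst sum.Sigma) (simp_all add: finite_permutations fin_Ch split_def)
  also have "\<dots> = (\<Sum>ch\<in>choices k Z. of_int (sign (fst ch))
                    * (\<Prod>j\<in>{1..n}. \<beta> j ^ count (multiset_union k (snd ch)) j))"
  proof (rule sum.cong[OF refl])
    fix ch assume "ch \<in> choices k Z"
    then have "\<forall>i\<in>{1..k}. snd ch i \<subseteq> {1..n}"
      using Z snd_choices_subset by blast
    then have "(\<Prod>i\<in>{1..k}. \<Prod>j\<in>snd ch i. \<beta> j)
             = (\<Prod>j\<in>{1..n}. \<beta> j ^ count (multiset_union k (snd ch)) j)"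
      unfolding multiset_union_def by (intro prod_prod_eq_prod_power_count) simp_all
    then show "of_int (sign (fst ch)) * (\<Prod>i\<in>{1..k}. \<Prod>j\<in>snd ch i. \<beta> j)
             = of_int (sign (fst ch)) * (\<Prod>j\<in>{1..n}. \<beta> j ^ count (multiset_union k (snd ch)) j)"
      by (rule arg_cong)
  qed
  finally show ?thesis .
qed

section \<open>Zero sets of the support pattern\<close>

lemma card_row_supp_add_card_zero_set:
  "card (row_supp n M i) + card (zero_set n M i) = n"
proof -
  have "card {1..n} = card (row_supp n M i \<union> zero_set n M i)"
    by (rule arg_cong[where f = card]) (auto simp: row_supp_def zero_set_def)
  also have "\<dots> = card (row_supp n M i) + card (zero_set n M i)"
    by (rule card_Un_disjoint) (auto simp: row_supp_def zero_set_def)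
  finally show ?thesis by simp
qed

lemma zero_set_subset: "zero_set n M i \<subseteq> {1..n}"
  by (auto simp: zero_set_def)

lemma card_zero_set:
  assumes "card (row_supp n M i) = n - k + 1" and "k \<le> n"
  shows "card (zero_set n M i) = k - 1"
  using card_row_supp_add_card_zero_set[of n M i] assms by arith

lemma Inter_zero_set_eq:
  assumes "I \<noteq> {}"
  shows "(\<Inter>i\<in>I. zero_set n M i) = {1..n} - (\<Union>i\<in>I. row_supp n M i)"
  using assms by (auto simp: zero_set_def row_supp_def)

lemma card_Inter_zero_set_le:
  assumes "MDS_condition n k M" and "I \<subseteq> {1..k}" and "I \<noteq> {}"
  shows "card (\<Inter>i\<in>I. zero_set n M i) \<le> k - card I"
proof -
  let ?U = "\<Union>i\<in>I. row_supp n M i"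
  have "?U \<subseteq> {1..n}"
    by (auto simp: row_supp_def)
  moreover from this have "finite ?U"
    by (rule finite_subset) simp
  ultimately have "card (\<Inter>i\<in>I. zero_set n M i) = n - card ?U"
    using assms(3) by (simp add: Inter_zero_set_eq card_Diff_subset)
  moreover have "n - k + card I \<le> card ?U"
    using assms unfolding MDS_condition_def by blast
  moreover have "card I \<le> k"
    using card_mono[OF _ assms(2)] by simp
  ultimately show ?thesis by linarith
qed

lemma zero_sets_cover:
  assumes "MDS_condition n k M" and "1 \<le> k"
  shows "\<exists>i\<in>{1..k}. j \<notin> zero_set n M i"
proof -
  have "(\<Inter>i\<in>{1..k}. zero_set n M i) \<subseteq> zero_set n M 1"
    using assms(2) by (intro INT_lower) simp
  then have "finite (\<Inter>i\<in>{1..k}. zero_set n M i)"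
    by (rule finite_subset) (simp add: zero_set_def)
  moreover have "card (\<Inter>i\<in>{1..k}. zero_set n M i) = 0"
    using card_Inter_zero_set_le[OF assms(1), of "{1..k}"] assms(2) by simp
  ultimately have "(\<Inter>i\<in>{1..k}. zero_set n M i) = {}"
    by simp
  then show ?thesis by blast
qed

section \<open>Evaluation codes\<close>

definition codeword :: "nat \<Rightarrow> nat \<Rightarrow> (nat \<Rightarrow> nat \<Rightarrow> 'a::field) \<Rightarrow> (nat \<Rightarrow> 'a) \<Rightarrow> nat \<Rightarrow> 'a" where
  "codeword n k G c = (\<lambda>j. if j \<in> {1..n} then \<Sum>i\<in>{1..k}. c i * G i j else 0)"

lemma gen_code_eq_range_codeword: "gen_code n k G = range (codeword n k G)"
  by (auto simp: gen_code_def codeword_def)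

lemma hamming_dist_codeword:
  "hamming_dist n (codeword n k G c) (codeword n k G c')
     = card {j \<in> {1..n}. (\<Sum>i\<in>{1..k}. (c i - c' i) * G i j) \<noteq> 0}"
  unfolding hamming_dist_def codeword_def
  by (intro arg_cong[where f = card] Collect_cong) (auto simp: left_diff_distrib sum_subtractf)

lemma codeword_cong:
  assumes "\<forall>i\<in>{1..k}. c i = c' i"
  shows "codeword n k G c = codeword n k G c'"
proof -
  have "(\<Sum>i\<in>{1..k}. c i * G i j) = (\<Sum>i\<in>{1..k}. c' i * G i j)" for j
    using assms by (intro sum.cong) auto
  then show ?thesis
    unfolding codeword_def by presburger
qed

lemma min_distance_gen_code_eqI:
  fixes G :: "nat \<Rightarrow> nat \<Rightarrow> 'a::field"
  assumes weight: "\<And>c. \<exists>i\<in>{1..k}. c i \<noteq> 0 \<Longrightarrow>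
                     n - k + 1 \<le> card {j \<in> {1..n}. (\<Sum>i\<in>{1..k}. c i * G i j) \<noteq> 0}"
    and row: "i0 \<in> {1..k}" "card {j \<in> {1..n}. G i0 j \<noteq> 0} = n - k + 1"
  shows "min_distance n (gen_code n k G) = n - k + 1"
  unfolding min_distance_def gen_code_eq_range_codeword
proof (rule Min_eqI)
  have "hamming_dist n u v \<le> card {1..n}" for u v :: "nat \<Rightarrow> 'a"
    unfolding hamming_dist_def by (rule card_mono) auto
  then have "{hamming_dist n u v |u v. u \<in> range (codeword n k G) \<and> v \<in> range (codeword n k G) \<and> u \<noteq> v}
             \<subseteq> {..n}"
    by auto
  then show "finite {hamming_dist n u v |u v. u \<in> range (codeword n k G) \<and> v \<in> range (codeword n k G) \<and> u \<noteq> v}"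
    using finite_subset by blast
next
  fix y assume "y \<in> {hamming_dist n u v |u v. u \<in> range (codeword n k G) \<and> v \<in> range (codeword n k G) \<and> u \<noteq> v}"
  then obtain c c' where y: "y = hamming_dist n (codeword n k G c) (codeword n k G c')"
    and ne: "codeword n k G c \<noteq> codeword n k G c'"
    by blast
  have "\<exists>i\<in>{1..k}. c i - c' i \<noteq> 0"
    using ne codeword_cong[of k c c'] by auto
  then show "n - k + 1 \<le> y"
    unfolding y hamming_dist_codeword by (rule weight)
next
  define \<delta> where "\<delta> i = (if i = i0 then 1 else 0 :: 'a)" for i
  have "(\<delta> i - 0) * G i j = (if i = i0 then G i j else 0)" for i j
    by (simp add: \<delta>_def)
  then have "(\<Sum>i\<in>{1..k}. (\<delta> i - 0) * G i j) = G i0 j" for j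
    using row(1) by simp
  then have hd: "hamming_dist n (codeword n k G \<delta>) (codeword n k G (\<lambda>_. 0)) = n - k + 1"
    using hamming_dist_codeword[of n k G \<delta> "\<lambda>_. 0"] row(2) by simp
  have ne: "codeword n k G \<delta> \<noteq> codeword n k G (\<lambda>_. 0)"
  proof
    assume "codeword n k G \<delta> = codeword n k G (\<lambda>_. 0)"
    then have "hamming_dist n (codeword n k G \<delta>) (codeword n k G (\<lambda>_. 0)) = 0"
      by (simp add: hamming_dist_def)
    with hd show False by simp
  qed
  show "n - k + 1 \<in> {hamming_dist n u v |u v. u \<in> range (codeword n k G) \<and> v \<in> range (codeword n k G) \<and> u \<noteq> v}"
    by (intro CollectI exI[of _ "codeword n k G \<delta>"] exI[of _ "codeword n k G (\<lambda>_. 0)"])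
      (use hd ne in auto)
qed

lemma MDS_generatorI:
  fixes G :: "nat \<Rightarrow> nat \<Rightarrow> 'a::field"
  assumes weight: "\<And>c. \<exists>i\<in>{1..k}. c i \<noteq> 0 \<Longrightarrow>
                     n - k + 1 \<le> card {j \<in> {1..n}. (\<Sum>i\<in>{1..k}. c i * G i j) \<noteq> 0}"
    and row: "i0 \<in> {1..k}" "card {j \<in> {1..n}. G i0 j \<noteq> 0} = n - k + 1"
  shows "MDS_generator n k G"
proof -
  have indep: "\<forall>i\<in>{1..k}. c i = 0" if "\<forall>j\<in>{1..n}. (\<Sum>i\<in>{1..k}. c i * G i j) = 0" for c
  proof (rule ccontr)
    assume "\<not> (\<forall>i\<in>{1..k}. c i = 0)"
    then have "0 < card {j \<in> {1..n}. (\<Sum>i\<in>{1..k}. c i * G i j) \<noteq> 0}"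
      using weight[of c] by fastforce
    then have "{j \<in> {1..n}. (\<Sum>i\<in>{1..k}. c i * G i j) \<noteq> 0} \<noteq> {}"
      by (rule card_gt_0_iff[THEN iffD1, THEN conjunct1])
    with that show False by blast
  qed
  then show ?thesis
    unfolding MDS_generator_def using min_distance_gen_code_eqI[OF weight row] by blast
qed

lemma card_poly_eval_nonzero_ge:
  fixes p :: "'a::idom poly"
  assumes "p \<noteq> 0" and "inj_on \<alpha> A" and "finite A"
  shows "card A \<le> card {j \<in> A. poly p (\<alpha> j) \<noteq> 0} + degree p"
proof -
  let ?R = "{j \<in> A. poly p (\<alpha> j) = 0}"
  have "card ?R = card (\<alpha> ` ?R)"
    by (rule card_image[symmetric]) (rule inj_on_subset[OF assms(2)], auto)
  also have "\<dots> \<le> card {x. poly p x = 0}"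
    by (rule card_mono[OF poly_roots_finite[OF assms(1)]]) auto
  also have "\<dots> \<le> degree p"
    by (rule card_poly_roots_bound[OF assms(1)])
  finally have "card ?R \<le> degree p" .
  moreover have "card A = card {j \<in> A. poly p (\<alpha> j) \<noteq> 0} + card ?R"
  proof -
    have "A = {j \<in> A. poly p (\<alpha> j) \<noteq> 0} \<union> ?R"
      by auto
    then show ?thesis
      using assms(3) by (metis (no_types, lifting) card_Un_disjoint disjoint_iff finite_Un mem_Collect_eq)
  qed
  ultimately show ?thesis by linarith
qed

lemma poly_prod_linear_factors_eq_0_iff:
  fixes \<beta> :: "nat \<Rightarrow> 'a::idom"
  assumes "inj_on \<beta> A" and "Z \<subseteq> A" and "finite Z" and "j \<in> A"
  shows "poly (\<Prod>j'\<in>Z. [:\<beta> j', 1:]) (- \<beta> j) = 0 \<longleftrightarrow> j \<in> Z"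
proof -
  have "poly (\<Prod>j'\<in>Z. [:\<beta> j', 1:]) (- \<beta> j) = (\<Prod>j'\<in>Z. \<beta> j' - \<beta> j)"
    by (simp add: poly_prod)
  also have "\<dots> = 0 \<longleftrightarrow> (\<exists>j'\<in>Z. \<beta> j' = \<beta> j)"
    using assms(3) by simp
  also have "\<dots> \<longleftrightarrow> j \<in> Z"
    using assms(1,2,4) by (auto dest: inj_onD)
  finally show ?thesis .
qed

lemma MDS_generator_poly_eval:
  fixes f :: "nat \<Rightarrow> 'a::field poly"
  assumes "k \<le> n"
    and indep: "\<And>c. (\<Sum>i\<in>{1..k}. smult (c i) (f i)) = 0 \<Longrightarrow> \<forall>i\<in>{1..k}. c i = 0"
    and deg: "\<And>i. i \<in> {1..k} \<Longrightarrow> degree (f i) \<le> k - 1"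
    and inj: "inj_on \<alpha> {1..n}"
    and row: "i0 \<in> {1..k}" "card {j \<in> {1..n}. poly (f i0) (\<alpha> j) \<noteq> 0} = n - k + 1"
  shows "MDS_generator n k (\<lambda>i j. poly (f i) (\<alpha> j))"
proof (rule MDS_generatorI[of k n "\<lambda>i j. poly (f i) (\<alpha> j)" i0, OF _ row])
  fix c :: "nat \<Rightarrow> 'a" assume nonzero: "\<exists>i\<in>{1..k}. c i \<noteq> 0"
  define g where "g = (\<Sum>i\<in>{1..k}. smult (c i) (f i))"
  have "g \<noteq> 0"
  proof
    assume "g = 0"
    then have "\<forall>i\<in>{1..k}. c i = 0"
      unfolding g_def by (rule indep)
    with nonzero show False by blast
  qed
  have "degree g \<le> k - 1"
    unfolding g_def
  proof (rule degree_sum_le)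
    fix i assume "i \<in> {1..k}"
    then show "degree (smult (c i) (f i)) \<le> k - 1"
      by (rule order.trans[OF degree_smult_le deg])
  qed simp
  have "card {1..n} \<le> card {j \<in> {1..n}. poly g (\<alpha> j) \<noteq> 0} + degree g"
    by (rule card_poly_eval_nonzero_ge[OF \<open>g \<noteq> 0\<close> inj finite_atLeastAtMost])
  moreover have "1 \<le> k"
    using row(1) by simp
  ultimately have bound: "n - k + 1 \<le> card {j \<in> {1..n}. poly g (\<alpha> j) \<noteq> 0}"
    using \<open>degree g \<le> k - 1\<close> \<open>k \<le> n\<close> by simp
  have eval: "(\<Sum>i\<in>{1..k}. c i * poly (f i) (\<alpha> j)) = poly g (\<alpha> j)" for j
    by (simp add: g_def poly_sum)
  show "n - k + 1 \<le> card {j \<in> {1..n}. (\<Sum>i\<in>{1..k}. c i * poly (f i) (\<alpha> j)) \<noteq> 0}"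
    unfolding eval by (rule bound)
qed

section \<open>The construction\<close>

lemma exists_inj_det_esym_nonzero:
  fixes Z :: "nat \<Rightarrow> nat set"
  assumes Z: "\<forall>i\<in>{1..k}. Z i \<subseteq> {1..n}"
    and cover: "\<forall>j. \<exists>i\<in>{1..k}. j \<notin> Z i"
    and uniq: "unique_multiset_union k Z"
    and card: "n + (k - 1) \<le> card (UNIV :: 'a::{finite,field} set)"
  shows "\<exists>\<beta> :: nat \<Rightarrow> 'a. inj_on \<beta> {1..n} \<and> det (border_mat k (\<lambda>i t. esym (Z i) \<beta> (t - 1))) \<noteq> 0"
proof -
  define e where "e ch = count (multiset_union k (snd ch))" for ch :: "(nat \<Rightarrow> nat) \<times> (nat \<Rightarrow> nat set)"
  have finZ: "\<forall>i\<in>{1..k}. finite (Z i)"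
    using Z finite_subset by blast
  obtain ch0 where ch0: "ch0 \<in> choices k Z"
    and "{ch \<in> choices k Z. \<forall>j\<in>{1..n}. e ch j = e ch0 j} = {ch0}"
    using unique_multiset_unionE[OF uniq Z] unfolding e_def by blast
  then have "(\<Sum>ch | ch \<in> choices k Z \<and> (\<forall>j\<in>{1..n}. e ch j = e ch0 j). of_int (sign (fst ch)) :: 'a) \<noteq> 0"
    by (simp add: sign_def)
  moreover have "\<forall>ch\<in>choices k Z. \<forall>j\<in>{1..n}. e ch j \<le> k - 1"
    using count_multiset_union_le[OF _ finZ] cover unfolding e_def by blast
  ultimately obtain \<beta> :: "nat \<Rightarrow> 'a" where "inj_on \<beta> {1..n}"
    and "(\<Sum>ch\<in>choices k Z. of_int (sign (fst ch)) * (\<Prod>j\<in>{1..n}. \<beta> j ^ e ch j)) \<noteq> 0"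
    using exists_inj_nonvanishing[of "choices k Z" n e "k - 1"] finite_choices[OF finZ] card
    by blast
  moreover have "det (border_mat k (\<lambda>i t. esym (Z i) \<beta> (t - 1)))
      = (\<Sum>ch\<in>choices k Z. of_int (sign (fst ch)) * (\<Prod>j\<in>{1..n}. \<beta> j ^ e ch j))"
    unfolding det_border_mat e_def by (rule sum_permutes_esym_eq_sum_choices[OF Z])
  ultimately show ?thesis by auto
qed

lemma exists_MDS_generator_vanishing_on:
  fixes Z :: "nat \<Rightarrow> nat set"
  assumes k: "1 \<le> k" "k \<le> n"
    and Z: "\<forall>i\<in>{1..k}. Z i \<subseteq> {1..n} \<and> card (Z i) = k - 1"
    and cover: "\<forall>j. \<exists>i\<in>{1..k}. j \<notin> Z i"
    and uniq: "unique_multiset_union k Z"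
    and card: "n + (k - 1) \<le> card (UNIV :: 'a::{finite,field} set)"
  shows "\<exists>G :: nat \<Rightarrow> nat \<Rightarrow> 'a. (\<forall>i\<in>{1..k}. \<forall>j\<in>{1..n}. G i j = 0 \<longleftrightarrow> j \<in> Z i)
                                  \<and> MDS_generator n k G"
proof -
  obtain \<beta> :: "nat \<Rightarrow> 'a" where inj: "inj_on \<beta> {1..n}"
    and det: "det (border_mat k (\<lambda>i t. esym (Z i) \<beta> (t - 1))) \<noteq> 0"
    using exists_inj_det_esym_nonzero[of k Z n] Z cover uniq card by blast
  define f where "f i = (\<Prod>j\<in>Z i. [:\<beta> j, 1:])" for i
  have Z_sub: "Z i \<subseteq> {1..n}" and Z_card: "card (Z i) = k - 1" if "i \<in> {1..k}" for i
    using Z that by blast+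
  have finZ: "finite (Z i)" if "i \<in> {1..k}" for i
    using Z_sub[OF that] finite_subset by blast
  have deg: "degree (f i) \<le> k - 1" if "i \<in> {1..k}" for i
  proof -
    have "degree (f i) \<le> sum (degree \<circ> (\<lambda>j. [:\<beta> j, 1:])) (Z i)"
      unfolding f_def by (rule degree_prod_sum_le[OF finZ[OF that]])
    also have "\<dots> = k - 1"
      using Z_card[OF that] by simp
    finally show ?thesis .
  qed
  have "border_mat k (\<lambda>i t. coeff (f i) (k - t)) = border_mat k (\<lambda>i t. esym (Z i) \<beta> (t - 1))"
  proof (rule border_mat_cong)
    fix i t assume i: "i \<in> {1..k}" and t: "t \<in> {1..k}"
    then have le: "k - t \<le> card (Z i)" and eq: "card (Z i) - (k - t) = t - 1"
      using Z_card[OF i] by auto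
    have "coeff (f i) (k - t) = esym (Z i) \<beta> (card (Z i) - (k - t))"
      unfolding f_def by (rule coeff_prod_linear_factors[OF finZ[OF i] le])
    then show "coeff (f i) (k - t) = esym (Z i) \<beta> (t - 1)"
      unfolding eq .
  qed
  then have indep: "\<forall>i\<in>{1..k}. c i = 0" if "(\<Sum>i\<in>{1..k}. smult (c i) (f i)) = 0" for c
    using lin_indep_if_det_border_coeff_nonzero[OF _ that] det by metis
  have inj': "inj_on (\<lambda>j. - \<beta> j) {1..n}"
  proof (rule inj_onI)
    fix x y assume "x \<in> {1..n}" and "y \<in> {1..n}" and "- \<beta> x = - \<beta> y"
    then show "x = y"
      using inj by (simp add: inj_on_eq_iff)
  qed
  have zeros: "\<forall>i\<in>{1..k}. \<forall>j\<in>{1..n}. poly (f i) (- \<beta> j) = 0 \<longleftrightarrow> j \<in> Z i"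
  proof (intro ballI)
    fix i j assume i: "i \<in> {1..k}" and j: "j \<in> {1..n}"
    show "poly (f i) (- \<beta> j) = 0 \<longleftrightarrow> j \<in> Z i"
      unfolding f_def by (rule poly_prod_linear_factors_eq_0_iff[OF inj Z_sub[OF i] finZ[OF i] j])
  qed
  have one: "1 \<in> {1..k}"
    using k by simp
  have "poly (f 1) (- \<beta> j) \<noteq> 0 \<longleftrightarrow> j \<notin> Z 1" if "j \<in> {1..n}" for j
    using zeros one that by simp
  then have "{j \<in> {1..n}. poly (f 1) (- \<beta> j) \<noteq> 0} = {1..n} - Z 1"
    by auto
  then have "card {j \<in> {1..n}. poly (f 1) (- \<beta> j) \<noteq> 0} = n - k + 1"
    using card_Diff_subset[OF finZ[OF one] Z_sub[OF one]] Z_card[OF one] k by simp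
  then have "MDS_generator n k (\<lambda>i j. poly (f i) (- \<beta> j))"
    using MDS_generator_poly_eval[OF k(2) indep deg inj' one] by simp
  with zeros show ?thesis
    by (intro exI[of _ "\<lambda>i j. poly (f i) (- \<beta> j)"] conjI)
qed

lemma exists_MDS_generator_fitting:
  fixes M :: "nat \<Rightarrow> nat \<Rightarrow> bool"
  assumes k: "1 \<le> k" "k \<le> n"
    and weight: "\<forall>i\<in>{1..k}. card (row_supp n M i) = n - k + 1"
    and mds: "MDS_condition n k M"
    and uniq: "unique_multiset_union k (zero_set n M)"
    and card: "n + k - 1 \<le> card (UNIV :: 'a::{finite,field} set)"
  shows "\<exists>G :: nat \<Rightarrow> nat \<Rightarrow> 'a. fits n k M G \<and> MDS_generator n k G"
proof -
  have "\<forall>i\<in>{1..k}. zero_set n M i \<subseteq> {1..n} \<and> card (zero_set n M i) = k - 1"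
    using weight k(2) zero_set_subset card_zero_set by blast
  moreover have "\<forall>j. \<exists>i\<in>{1..k}. j \<notin> zero_set n M i"
    using zero_sets_cover[OF mds k(1)] by blast
  moreover have "n + (k - 1) \<le> card (UNIV :: 'a set)"
    using card k(1) by simp
  ultimately obtain G :: "nat \<Rightarrow> nat \<Rightarrow> 'a"
    where G: "\<forall>i\<in>{1..k}. \<forall>j\<in>{1..n}. G i j = 0 \<longleftrightarrow> j \<in> zero_set n M i"
      and "MDS_generator n k G"
    using exists_MDS_generator_vanishing_on[OF k _ _ uniq] by blast
  moreover have "fits n k M G"
    unfolding fits_def using G by (simp add: zero_set_def)
  ultimately show ?thesis by blast
qed

theorem lemma3:
  shows "(\<forall>n k M. 1 \<le> k \<and> k \<le> n
            \<and> (\<forall>i\<in>{1..k}. card (row_supp n M i) = n - k + 1)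
            \<and> MDS_condition n k M
            \<and> unique_multiset_union k (zero_set n M)
            \<and> card (UNIV :: 'a::{finite,field} set) \<ge> n + k - 1
          \<longrightarrow> (\<exists>G :: nat \<Rightarrow> nat \<Rightarrow> 'a. fits n k M G \<and> MDS_generator n k G))
       \<and> ((\<forall>n k (Z :: nat \<Rightarrow> nat set). 1 \<le> k \<and> k \<le> n
            \<and> (\<forall>i\<in>{1..k}. Z i \<subseteq> {1..n} \<and> card (Z i) = k - 1)
            \<and> (\<forall>I. I \<subseteq> {1..k} \<and> I \<noteq> {} \<longrightarrow> card (\<Inter>i\<in>I. Z i) \<le> k - card I)
            \<longrightarrow> unique_multiset_union k Z)
          \<longrightarrow> (\<forall>n k M. 1 \<le> k \<and> k \<le> n
            \<and> (\<forall>i\<in>{1..k}. card (row_supp n M i) = n - k + 1)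
            \<and> MDS_condition n k M
            \<and> card (UNIV :: 'a set) \<ge> n + k - 1
          \<longrightarrow> (\<exists>G :: nat \<Rightarrow> nat \<Rightarrow> 'a. fits n k M G \<and> MDS_generator n k G)))"
proof (intro conjI impI allI)
  fix n k M
  assume "1 \<le> k \<and> k \<le> n \<and> (\<forall>i\<in>{1..k}. card (row_supp n M i) = n - k + 1) \<and> MDS_condition n k M
          \<and> unique_multiset_union k (zero_set n M) \<and> n + k - 1 \<le> card (UNIV :: 'a set)"
  then show "\<exists>G :: nat \<Rightarrow> nat \<Rightarrow> 'a. fits n k M G \<and> MDS_generator n k G"
    by (elim conjE) (rule exists_MDS_generator_fitting)
next
  fix n k M
  assume H: "\<forall>n k (Z :: nat \<Rightarrow> nat set). 1 \<le> k \<and> k \<le> n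
               \<and> (\<forall>i\<in>{1..k}. Z i \<subseteq> {1..n} \<and> card (Z i) = k - 1)
               \<and> (\<forall>I. I \<subseteq> {1..k} \<and> I \<noteq> {} \<longrightarrow> card (\<Inter>i\<in>I. Z i) \<le> k - card I)
               \<longrightarrow> unique_multiset_union k Z"
    and A: "1 \<le> k \<and> k \<le> n \<and> (\<forall>i\<in>{1..k}. card (row_supp n M i) = n - k + 1) \<and> MDS_condition n k M
            \<and> n + k - 1 \<le> card (UNIV :: 'a set)"
  have "\<forall>i\<in>{1..k}. zero_set n M i \<subseteq> {1..n} \<and> card (zero_set n M i) = k - 1"
    using A zero_set_subset card_zero_set by blast
  moreover have "\<forall>I. I \<subseteq> {1..k} \<and> I \<noteq> {} \<longrightarrow> card (\<Inter>i\<in>I. zero_set n M i) \<le> k - card I"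
    using A card_Inter_zero_set_le by blast
  ultimately have "unique_multiset_union k (zero_set n M)"
    using H[rule_format, of k n "zero_set n M"] A by blast
  with A show "\<exists>G :: nat \<Rightarrow> nat \<Rightarrow> 'a. fits n k M G \<and> MDS_generator n k G"
    by (elim conjE) (rule exists_MDS_generator_fitting)
qed

end
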